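(* Let $g\in\mathbb{R}^n$ be a unit vector and $H$ a symmetric positive definite $n\times n$ matrix. Set $s=-Hg$, $g_+=\frac{s}{\|s\|}$, $y=g_+-g$, $V=I-\frac{sy^T}{s^Ty}$, $H_+=VHV^T+\frac{ss^T}{s^Ty}$. Then $$\det H_+\le\tfrac12\det H\quad\text{and}\quad \lambda_{\max}(H_+)\le\lambda_{\max}(H).$$
   Context: $\lambda_{\max}(H)$ denotes the largest eigenvalue of a symmetric matrix $H$; $\|\cdot\|$ is the Euclidean norm. *)

theory Defs
  imports "HOL-Analysis.Analysis"
begin

definition outer :: "real^'n \<Rightarrow> real^'n \<Rightarrow> real^'n^'n" where
  "outer u v = (\<chi> i j. u $ i * v $ j)"

definition eigenvalues :: "real^'n^'n \<Rightarrow> real set" where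
  "eigenvalues A = {c. \<exists>v. v \<noteq> 0 \<and> A *v v = c *\<^sub>R v}"

text \<open>Largest eigenvalue (meaningful for symmetric matrices, whose eigenvalues are all real).\<close>
definition lambda_max :: "real^'n^'n \<Rightarrow> real" where
  "lambda_max A = Max (eigenvalues A)"

definition pos_def :: "real^'n^'n \<Rightarrow> bool" where
  "pos_def A \<longleftrightarrow> (\<forall>x. x \<noteq> 0 \<longrightarrow> x \<bullet> (A *v x) > 0)"

end

theory Submission
  imports Defs
begin

(* With a = g^T H g and \<sigma> = |s| one has s^T y = \<sigma> + a, and Cauchy-Schwarz gives
   a \<le> \<sigma> \<le> \<lambda>_max(H). Because H g = -s, the update is a congruence of H by a rank-one
   perturbation of the identity, which yields det H_+ = a/(\<sigma> + a) det H \<le> det H / 2.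
   The eigenvalue bound compares the quadratic form of H_+ at x with that of H at a
   correction of V^T x, and again needs only \<sigma> \<le> \<lambda>_max(H). *)

declare transpose_matrix_vector [simp del]

lemma inner_matrix_vector_transpose:
  "x \<bullet> (A *v y) = (transpose A *v x) \<bullet> (y::real^'n)"
  by (simp add: dot_lmul_matrix[symmetric] transpose_matrix_vector)

lemma symmetric_inner_matrix_vector:
  fixes A :: "real^'n^'n"
  assumes "transpose A = A"
  shows "x \<bullet> (A *v y) = (A *v x) \<bullet> y"
  using inner_matrix_vector_transpose[of x A y] assms by simp

lemma outer_mult_vector: "outer u v *v x = (v \<bullet> x) *\<^sub>R (u::real^'n)"
  by (simp add: vec_eq_iff outer_def matrix_vector_mult_def inner_vec_def sum_distrib_left mult_ac)

lemma transpose_outer: "transpose (outer u v) = outer v (u::real^'n)"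
  by (simp add: vec_eq_iff transpose_def outer_def)

lemma transpose_add_scaleR:
  "transpose (A + c *\<^sub>R B) = transpose A + c *\<^sub>R transpose (B::real^'n^'n)"
  by (simp add: vec_eq_iff transpose_def)


section \<open>The largest eigenvalue of a symmetric matrix\<close>

lemma psd_quadratic_form_zero_imp_kernel:
  fixes B :: "real^'n^'n"
  assumes sym: "transpose B = B" and psd: "\<And>x. x \<bullet> (B *v x) \<ge> 0"
    and u: "u \<bullet> (B *v u) = 0"
  shows "B *v u = 0"
proof (rule ccontr)
  assume "B *v u \<noteq> 0"
  define N where "N = (B *v u) \<bullet> (B *v u)"
  define q where "q = (B *v u) \<bullet> (B *v (B *v u))"
  have N: "N > 0" using \<open>B *v u \<noteq> 0\<close> by (simp add: N_def)
  have q: "q \<ge> 0" using psd unfolding q_def by blast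
  define t where "t = N / (q + 1)"
  have t: "t > 0" using N q by (simp add: t_def)
  have uBBu: "u \<bullet> (B *v (B *v u)) = N"
    unfolding N_def by (rule symmetric_inner_matrix_vector[OF sym])
  define w where "w = u - t *\<^sub>R (B *v u)"
  have "w \<bullet> (B *v w) = t * (t * q - 2 * N)"
    unfolding w_def matrix_vector_mult_diff_distrib matrix_vector_mult_scaleR
    by (simp add: inner_diff_left inner_diff_right uBBu u N_def q_def algebra_simps inner_commute)
  also have "\<dots> < 0"
  proof -
    have "t * q < N" using N q unfolding t_def by (simp add: field_simps)
    then show ?thesis using t N by (simp add: mult_pos_neg)
  qed
  finally show False using psd[of w] by simp
qed

lemma finite_eigenvalues_symmetric:
  fixes A :: "real^'n^'n"
  assumes sym: "transpose A = A"
  shows "finite (eigenvalues A)"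
proof -
  define E where "E = eigenvalues A"
  define ev where "ev c = (SOME v. v \<noteq> 0 \<and> A *v v = c *\<^sub>R v)" for c
  have ev: "ev c \<noteq> 0 \<and> A *v ev c = c *\<^sub>R ev c" if "c \<in> E" for c
  proof -
    from that obtain v where "v \<noteq> 0 \<and> A *v v = c *\<^sub>R v" unfolding E_def eigenvalues_def by blast
    then show ?thesis unfolding ev_def by (rule someI)
  qed
  have orth: "ev c \<bullet> ev d = 0" if "c \<in> E" "d \<in> E" "c \<noteq> d" for c d
  proof -
    have "c * (ev c \<bullet> ev d) = (A *v ev c) \<bullet> ev d" using ev[OF that(1)] by simp
    also have "\<dots> = ev c \<bullet> (A *v ev d)" using symmetric_inner_matrix_vector[OF sym] by simp
    also have "\<dots> = d * (ev c \<bullet> ev d)" using ev[OF that(2)] by simp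
    finally show ?thesis using that(3) by simp
  qed
  have "inj_on ev E"
  proof
    fix c d assume cd: "c \<in> E" "d \<in> E" "ev c = ev d"
    show "c = d"
    proof (rule ccontr)
      assume "c \<noteq> d"
      then have "ev c \<bullet> ev c = 0" using orth[OF cd(1,2)] cd(3) by simp
      then show False using ev[OF cd(1)] by simp
    qed
  qed
  moreover have "independent (ev ` E)"
    by (rule pairwise_orthogonal_independent) (use orth ev in \<open>auto simp: pairwise_def orthogonal_def\<close>)
  ultimately show ?thesis
    using independent_imp_finite finite_imageD unfolding E_def by blast
qed

lemma eigenvalue_le_rayleigh_bound:
  fixes A :: "real^'n^'n"
  assumes "c \<in> eigenvalues A" and "\<And>x. x \<bullet> (A *v x) \<le> m * (x \<bullet> x)"
  shows "c \<le> m"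
proof -
  obtain v where "v \<noteq> 0" "A *v v = c *\<^sub>R v"
    using assms(1) unfolding eigenvalues_def by blast
  then have "c * (v \<bullet> v) \<le> m * (v \<bullet> v)" "v \<bullet> v > 0"
    using assms(2)[of v] by simp_all
  then show ?thesis by (rule mult_right_le_imp_le)
qed

text \<open>The maximum of the quadratic form on the unit sphere is an eigenvalue, because the
  shifted form \<open>m |x|\<^sup>2 - x\<^sup>T A x\<close> is positive semidefinite and vanishes at a maximiser.\<close>

lemma symmetric_rayleigh_max_eigenvalue:
  fixes A :: "real^'n^'n"
  assumes sym: "transpose A = A"
  obtains m where "m \<in> eigenvalues A" and "\<And>x. x \<bullet> (A *v x) \<le> m * (x \<bullet> x)"
proof -
  let ?f = "\<lambda>x. x \<bullet> (A *v x)"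
  have "axis undefined 1 \<in> sphere (0::real^'n) 1" by simp
  then have "sphere (0::real^'n) 1 \<noteq> {}" by blast
  moreover have "continuous_on (sphere 0 1) ?f"
    by (intro continuous_on_inner continuous_on_id matrix_vector_mult_linear_continuous_on)
  ultimately obtain u where u: "u \<in> sphere 0 1" and umax: "\<forall>x \<in> sphere 0 1. ?f x \<le> ?f u"
    using continuous_attains_sup[OF compact_sphere] by blast
  define m where "m = ?f u"
  have ray: "?f x \<le> m * (x \<bullet> x)" for x
  proof (cases "x = 0")
    case False
    define z where "z = (1 / norm x) *\<^sub>R x"
    have "z \<in> sphere 0 1" using False by (simp add: z_def)
    then have "?f z \<le> m" using umax m_def by blast
    moreover have "?f x = (x \<bullet> x) * ?f z"
      using False by (simp add: z_def matrix_vector_mult_scaleR dot_square_norm power2_eq_square)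
    ultimately show ?thesis
      by (metis inner_ge_zero mult.commute mult_left_mono)
  qed simp
  define B where "B = m *\<^sub>R mat 1 - A"
  have Bx: "B *v x = m *\<^sub>R x - A *v x" for x
    by (simp add: B_def matrix_vector_mult_diff_rdistrib scaleR_matrix_vector_assoc[symmetric])
  have "transpose B = B"
    using sym by (simp add: B_def vec_eq_iff transpose_def mat_def)
  moreover have "x \<bullet> (B *v x) \<ge> 0" for x
    using ray[of x] by (simp add: Bx inner_diff_right)
  moreover have "u \<bullet> (B *v u) = 0"
    using u by (simp add: Bx inner_diff_right m_def dot_square_norm)
  ultimately have "B *v u = 0" by (rule psd_quadratic_form_zero_imp_kernel)
  then have "A *v u = m *\<^sub>R u" by (simp add: Bx)
  moreover have "u \<noteq> 0" using u by auto
  ultimately have "m \<in> eigenvalues A" unfolding eigenvalues_def by blast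
  then show thesis using ray by (rule that)
qed

lemma lambda_max_symmetric:
  fixes A :: "real^'n^'n"
  assumes sym: "transpose A = A"
  shows "lambda_max A \<in> eigenvalues A" and "x \<bullet> (A *v x) \<le> lambda_max A * (x \<bullet> x)"
proof -
  obtain m where m: "m \<in> eigenvalues A" and ray: "\<And>x. x \<bullet> (A *v x) \<le> m * (x \<bullet> x)"
    using symmetric_rayleigh_max_eigenvalue[OF sym] by blast
  have "lambda_max A = m"
    unfolding lambda_max_def
    by (rule Max_eqI[OF finite_eigenvalues_symmetric[OF sym] eigenvalue_le_rayleigh_bound[OF _ ray] m])
  then show "lambda_max A \<in> eigenvalues A" and "x \<bullet> (A *v x) \<le> lambda_max A * (x \<bullet> x)"
    using m ray by simp_all
qed


section \<open>Positive definite matrices\<close>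

lemma pos_def_nonneg:
  fixes H :: "real^'n^'n"
  assumes "pos_def H"
  shows "0 \<le> x \<bullet> (H *v x)"
  using assms unfolding pos_def_def by (cases "x = 0") (auto intro: less_imp_le)

lemma lambda_max_pos:
  fixes H :: "real^'n^'n"
  assumes sym: "transpose H = H" and pd: "pos_def H"
  shows "0 < lambda_max H"
proof -
  obtain v where "v \<noteq> 0" "H *v v = lambda_max H *\<^sub>R v"
    using lambda_max_symmetric(1)[OF sym] unfolding eigenvalues_def by blast
  then have "0 < lambda_max H * (v \<bullet> v)" "0 < v \<bullet> v"
    using pd unfolding pos_def_def by (metis inner_scaleR_right, simp)
  then show ?thesis by (simp add: zero_less_mult_iff)
qed

lemma pos_def_cauchy_schwarz:
  fixes H :: "real^'n^'n"
  assumes sym: "transpose H = H" and pd: "pos_def H"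
  shows "(p \<bullet> (H *v q))\<^sup>2 \<le> (p \<bullet> (H *v p)) * (q \<bullet> (H *v q))"
proof (cases "q = 0")
  case False
  define Q where "Q = q \<bullet> (H *v q)"
  define b where "b = p \<bullet> (H *v q)"
  have Q: "Q > 0" using pd False unfolding pos_def_def Q_def by blast
  have qHp: "q \<bullet> (H *v p) = b"
    unfolding b_def using symmetric_inner_matrix_vector[OF sym, of q p] by (simp add: inner_commute)
  define w where "w = p - (b / Q) *\<^sub>R q"
  have "0 \<le> w \<bullet> (H *v w)" by (rule pos_def_nonneg[OF pd])
  also have "w \<bullet> (H *v w) = p \<bullet> (H *v p) - b\<^sup>2 / Q"
    using Q unfolding w_def matrix_vector_mult_diff_distrib matrix_vector_mult_scaleR
    by (simp add: inner_diff_left inner_diff_right qHp b_def[symmetric] Q_def[symmetric]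
        field_simps power2_eq_square)
  finally show ?thesis using Q by (simp add: b_def Q_def field_simps)
qed simp

lemma norm_matrix_vector_le_lambda_max:
  fixes H :: "real^'n^'n"
  assumes sym: "transpose H = H" and pd: "pos_def H"
  shows "norm (H *v x) \<le> lambda_max H * norm x"
proof -
  define \<sigma> where "\<sigma> = norm (H *v x)"
  define L where "L = lambda_max H"
  have HxHx: "(H *v x) \<bullet> (H *v x) = \<sigma>\<^sup>2" by (simp add: \<sigma>_def dot_square_norm)
  have "(\<sigma>\<^sup>2)\<^sup>2 \<le> (x \<bullet> (H *v x)) * ((H *v x) \<bullet> (H *v (H *v x)))"
    using pos_def_cauchy_schwarz[OF sym pd, of x "H *v x"]
      symmetric_inner_matrix_vector[OF sym, of x "H *v x"] by (simp add: HxHx)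
  also have "\<dots> \<le> (norm x * \<sigma>) * (L * \<sigma>\<^sup>2)"
  proof (rule mult_mono)
    show "x \<bullet> (H *v x) \<le> norm x * \<sigma>" unfolding \<sigma>_def by (rule norm_cauchy_schwarz)
    show "(H *v x) \<bullet> (H *v (H *v x)) \<le> L * \<sigma>\<^sup>2"
      using lambda_max_symmetric(2)[OF sym, of "H *v x"] by (simp add: L_def HxHx)
    show "0 \<le> norm x * \<sigma>" by (simp add: \<sigma>_def)
    show "0 \<le> (H *v x) \<bullet> (H *v (H *v x))" by (rule pos_def_nonneg[OF pd])
  qed
  finally have "\<sigma> ^ 3 * \<sigma> \<le> \<sigma> ^ 3 * (L * norm x)"
    by (simp add: power2_eq_square power3_eq_cube algebra_simps)
  moreover have "0 \<le> L * norm x"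
    using lambda_max_pos[OF sym pd] by (simp add: L_def)
  moreover have "0 \<le> \<sigma>" by (simp add: \<sigma>_def)
  ultimately have "\<sigma> \<le> L * norm x"
    by (cases "\<sigma> = 0") (auto simp: mult_le_cancel_left_pos)
  then show ?thesis by (simp add: \<sigma>_def L_def)
qed

text \<open>Along the segment from \<open>H\<close> to the identity every matrix is positive definite, hence
  nonsingular, so by continuity the determinant cannot change sign.\<close>

lemma det_pos_if_pos_def:
  fixes H :: "real^'n^'n"
  assumes pd: "pos_def H"
  shows "det H > 0"
proof (rule ccontr)
  define M where "M t = t *\<^sub>R mat 1 + (1 - t) *\<^sub>R H" for t :: real
  have nonsingular: "det (M t) \<noteq> 0" if "0 \<le> t" "t \<le> 1" for t
  proof
    assume "det (M t) = 0"
    then obtain x where x: "x \<noteq> 0" "M t *v x = 0"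
      using invertible_det_nz invertible_left_inverse matrix_left_invertible_ker by metis
    have "x \<bullet> (M t *v x) = t * (x \<bullet> x) + (1 - t) * (x \<bullet> (H *v x))"
      by (simp add: M_def matrix_vector_mult_add_rdistrib scaleR_matrix_vector_assoc[symmetric]
          inner_add_right)
    moreover have "x \<bullet> x > 0" "x \<bullet> (H *v x) > 0"
      using x pd unfolding pos_def_def by auto
    ultimately have "x \<bullet> (M t *v x) > 0"
      using that by (cases "t = 0") (auto intro: add_pos_nonneg)
    then show False using x by simp
  qed
  have "continuous_on {0..1} (\<lambda>t. det (M t))"
    unfolding M_def det_def by (intro continuous_intros)
  moreover assume "\<not> det H > 0"
  then have "det (M 0) \<le> 0 \<and> 0 \<le> det (M 1)" by (simp add: M_def)
  ultimately obtain t where "0 \<le> t" "t \<le> 1" "det (M t) = 0"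
    using IVT'[of "\<lambda>t. det (M t)" 0 0 1] by auto
  then show False using nonsingular by blast
qed


section \<open>The matrix determinant lemma\<close>

lemma det_identity_row_replaced:
  fixes v :: "real^'n"
  shows "det (\<chi> i. if i = k then v else axis i 1) = v $ k"
proof -
  have row: "row i (mat 1 :: real^'n^'n) = axis i 1" for i
    by (simp add: row_def mat_def axis_def vec_eq_iff)
  have "(\<Sum>i\<in>UNIV. v $ i *s row i (mat 1 :: real^'n^'n)) = v"
    by (simp add: row basis_expansion)
  then show ?thesis
    using cramer_lemma_transpose[of k v "mat 1 :: real^'n^'n"] by (simp only: row det_I mult_1_right)
qed

text \<open>Expanding the updated rows one at a time by linearity: the summand \<open>u$j *s v\<close> of
  row \<open>j\<close> is a multiple of row \<open>k\<close>, so its contribution vanishes.\<close>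

lemma det_rank_one_rows_row_replaced:
  fixes u v :: "real^'n"
  assumes "finite T" "k \<notin> T"
  shows "det (\<chi> i. if i = k then v else if i \<in> T then axis i 1 + u $ i *s v else axis i 1) = v $ k"
  using assms
proof (induction T rule: finite_induct)
  case empty
  have "(\<chi> i. if i = k then v else if i \<in> {} then axis i 1 + u $ i *s v else axis i 1)
      = (\<chi> i. if i = k then v else axis i (1::real))"
    by (simp add: vec_eq_iff)
  then show ?case using det_identity_row_replaced[of k v] by simp
next
  case (insert j T)
  have jk: "j \<noteq> k" using insert by auto
  define C where
    "C i = (if i = k then v else if i \<in> T then axis i 1 + u $ i *s v else axis i (1::real))" for i
  have "(\<chi> i. if i = k then v else if i \<in> insert j T then axis i 1 + u $ i *s v else axis i 1)
      = (\<chi> i. if i = j then axis j 1 + u $ j *s v else C i)"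
    using jk by (auto simp: C_def vec_eq_iff)
  then have "det (\<chi> i. if i = k then v else if i \<in> insert j T then axis i 1 + u $ i *s v else axis i 1)
      = det (\<chi> i. if i = j then axis j 1 else C i) + u $ j * det (\<chi> i. if i = j then v else C i)"
    by (simp add: det_row_add det_row_mul)
  also have "(\<chi> i. if i = j then axis j 1 else C i) =
      (\<chi> i. if i = k then v else if i \<in> T then axis i 1 + u $ i *s v else axis i (1::real))"
    using insert jk by (auto simp: C_def vec_eq_iff)
  also have "det (\<chi> i. if i = j then v else C i) = 0"
    by (rule det_identical_rows[OF jk]) (simp add: row_def C_def jk vec_eq_iff)
  finally show ?case using insert by simp
qed

lemma det_rank_one_rows:
  fixes u v :: "real^'n"
  assumes "finite T"
  shows "det (\<chi> i. if i \<in> T then axis i 1 + u $ i *s v else axis i 1) = 1 + (\<Sum>i\<in>T. u $ i * v $ i)"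
  using assms
proof (induction T rule: finite_induct)
  case empty
  have "(\<chi> i. axis i 1) = (mat 1 :: real^'n^'n)"
    by (simp add: vec_eq_iff axis_def mat_def)
  then show ?case by simp
next
  case (insert k T)
  define D where "D i = (if i \<in> T then axis i 1 + u $ i *s v else axis i (1::real))" for i
  have "(\<chi> i. if i \<in> insert k T then axis i 1 + u $ i *s v else axis i 1)
      = (\<chi> i. if i = k then axis k 1 + u $ k *s v else D i)"
    by (auto simp: D_def vec_eq_iff)
  then have "det (\<chi> i. if i \<in> insert k T then axis i 1 + u $ i *s v else axis i 1)
      = det (\<chi> i. if i = k then axis k 1 else D i) + u $ k * det (\<chi> i. if i = k then v else D i)"
    by (simp add: det_row_add det_row_mul)
  also have "(\<chi> i. if i = k then axis k 1 else D i) =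
      (\<chi> i. if i \<in> T then axis i 1 + u $ i *s v else axis i (1::real))"
    using insert by (auto simp: D_def vec_eq_iff)
  also have "det (\<chi> i. if i = k then v else D i) = v $ k"
    unfolding D_def by (rule det_rank_one_rows_row_replaced) (use insert in auto)
  finally show ?case using insert by (simp add: algebra_simps)
qed

lemma det_identity_plus_outer: "det (mat 1 + outer u v) = 1 + u \<bullet> (v::real^'n)"
proof -
  have "mat 1 + outer u v = (\<chi> i. if i \<in> UNIV then axis i 1 + u $ i *s v else axis i (1::real))"
    by (simp add: vec_eq_iff outer_def mat_def axis_def)
  then show ?thesis using det_rank_one_rows[of UNIV u v] by (simp add: inner_vec_def)
qed


section \<open>The BFGS update\<close>

definition bfgs_projection :: "real^'n \<Rightarrow> real^'n \<Rightarrow> real^'n^'n" where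
  "bfgs_projection s y = mat 1 - (1 / (s \<bullet> y)) *\<^sub>R outer s y"

definition bfgs_update :: "real^'n^'n \<Rightarrow> real^'n \<Rightarrow> real^'n \<Rightarrow> real^'n^'n" where
  "bfgs_update H s y =
    bfgs_projection s y ** H ** transpose (bfgs_projection s y) + (1 / (s \<bullet> y)) *\<^sub>R outer s s"

lemma bfgs_projection_mult:
  "bfgs_projection s y *v x = x - ((y \<bullet> x) / (s \<bullet> y)) *\<^sub>R s"
  by (simp add: bfgs_projection_def matrix_vector_mult_diff_rdistrib
      scaleR_matrix_vector_assoc[symmetric] outer_mult_vector)

lemma transpose_bfgs_projection_mult:
  "transpose (bfgs_projection s y) *v x = x - ((s \<bullet> x) / (s \<bullet> y)) *\<^sub>R y"
proof -
  have "transpose (bfgs_projection s y) = mat 1 - (1 / (s \<bullet> y)) *\<^sub>R outer y s"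
    by (simp add: bfgs_projection_def vec_eq_iff transpose_def outer_def mat_def)
  then show ?thesis
    by (simp add: matrix_vector_mult_diff_rdistrib scaleR_matrix_vector_assoc[symmetric]
        outer_mult_vector)
qed

lemma inner_transpose_bfgs_projection:
  assumes "s \<bullet> y \<noteq> 0"
  shows "s \<bullet> (transpose (bfgs_projection s y) *v x) = 0"
  using assms by (simp add: transpose_bfgs_projection_mult inner_diff_right)

lemma bfgs_update_mult:
  "bfgs_update H s y *v x =
    bfgs_projection s y *v (H *v (transpose (bfgs_projection s y) *v x)) + ((s \<bullet> x) / (s \<bullet> y)) *\<^sub>R s"
  by (simp add: bfgs_update_def matrix_vector_mult_add_rdistrib matrix_vector_mul_assoc matrix_mul_assoc
      scaleR_matrix_vector_assoc[symmetric] outer_mult_vector)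

lemma symmetric_bfgs_update:
  assumes "transpose H = H"
  shows "transpose (bfgs_update H s y) = bfgs_update H s y"
  using assms
  by (simp add: bfgs_update_def transpose_add_scaleR transpose_outer matrix_transpose_mul matrix_mul_assoc)

lemma bfgs_update_quadratic_form:
  fixes H :: "real^'n^'n" and s y x :: "real^'n"
  assumes "s \<bullet> y \<noteq> 0"
  defines "z \<equiv> transpose (bfgs_projection s y) *v x"
  shows "x \<bullet> (bfgs_update H s y *v x) = z \<bullet> (H *v z) + (s \<bullet> x)\<^sup>2 / (s \<bullet> y)"
  by (simp add: bfgs_update_mult inner_add_right inner_matrix_vector_transpose[of x] z_def
      power2_eq_square inner_commute)

text \<open>If \<open>H g = -s\<close>, then \<open>H\<^sub>+ = M H M\<^sup>T\<close> for \<open>M = V + \<alpha> s g\<^sup>T\<close> with \<open>\<alpha>\<^sup>2 = 1 / (a s\<^sup>Ty)\<close>: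
  the cross terms vanish because \<open>V s = 0\<close> and \<open>g\<^sup>T H V\<^sup>T = 0\<close>, and \<open>M\<close> is a rank-one
  perturbation of the identity with determinant \<open>-\<alpha> a\<close>.\<close>

lemma det_bfgs_update_gradient:
  fixes H :: "real^'n^'n"
  assumes sym: "transpose H = H" and Hg: "H *v g = - s"
    and a_pos: "0 < g \<bullet> (H *v g)" and \<rho>_pos: "0 < s \<bullet> y"
  shows "det (bfgs_update H s y) = (g \<bullet> (H *v g)) / (s \<bullet> y) * det H"
proof -
  define a where "a = g \<bullet> (H *v g)"
  define \<rho> where "\<rho> = s \<bullet> y"
  define V where "V = bfgs_projection s y"
  define \<alpha> where "\<alpha> = 1 / sqrt (a * \<rho>)"
  have \<alpha>: "\<alpha> * \<alpha> * a = 1 / \<rho>"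
    using a_pos \<rho>_pos by (simp add: \<alpha>_def a_def \<rho>_def field_simps)
  have sg: "s \<bullet> g = - a"
    using Hg by (simp add: a_def inner_commute)
  define M where "M = mat 1 + outer s (\<alpha> *\<^sub>R g - (1 / \<rho>) *\<^sub>R y)"
  have M_eq: "M = V + \<alpha> *\<^sub>R outer s g"
    by (simp add: M_def V_def bfgs_projection_def \<rho>_def vec_eq_iff outer_def mat_def algebra_simps)
  have Mx: "M *v x = V *v x + (\<alpha> * (g \<bullet> x)) *\<^sub>R s" for x
    by (simp add: M_eq matrix_vector_mult_add_rdistrib scaleR_matrix_vector_assoc[symmetric]
        outer_mult_vector)
  have MTx: "transpose M *v x = transpose V *v x + (\<alpha> * (s \<bullet> x)) *\<^sub>R g" for x
    by (simp add: M_eq transpose_add_scaleR transpose_outer matrix_vector_mult_add_rdistrib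
        scaleR_matrix_vector_assoc[symmetric] outer_mult_vector)
  have Vs: "V *v s = 0"
    using \<rho>_pos by (simp add: V_def bfgs_projection_mult inner_commute)
  have "bfgs_update H s y = M ** H ** transpose M"
  proof (subst matrix_eq, intro allI)
    fix x
    define z where "z = transpose V *v x"
    have gHz: "g \<bullet> (H *v z) = 0"
      using symmetric_inner_matrix_vector[OF sym, of g z] inner_transpose_bfgs_projection[of s y x] \<rho>_pos
      by (simp add: Hg z_def V_def inner_commute)
    have "(M ** H ** transpose M) *v x = M *v (H *v (transpose M *v x))"
      by (simp only: matrix_vector_mul_assoc matrix_mul_assoc)
    also have "\<dots> = V *v (H *v z) + (\<alpha> * \<alpha> * a * (s \<bullet> x)) *\<^sub>R s"
      by (simp add: MTx z_def[symmetric] matrix_vector_right_distrib matrix_vector_mult_scaleR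
          Mx gHz Hg Vs inner_add_right a_def[symmetric] sg inner_commute[of g s]
          algebra_simps)
    also have "\<dots> = bfgs_update H s y *v x"
      by (simp add: bfgs_update_mult \<alpha> z_def V_def \<rho>_def)
    finally show "bfgs_update H s y *v x = (M ** H ** transpose M) *v x" by simp
  qed
  moreover have "det M = - \<alpha> * a"
    using \<rho>_pos by (simp add: M_def det_identity_plus_outer inner_diff_right sg \<rho>_def)
  ultimately have "det (bfgs_update H s y) = (\<alpha> * \<alpha> * a) * a * det H"
    by (simp add: det_mul det_transpose algebra_simps)
  also have "\<dots> = a / \<rho> * det H" by (simp only: \<alpha>) simp
  finally show ?thesis by (simp add: a_def \<rho>_def)
qed


section \<open>One step from a unit gradient\<close>

lemma normalized_gradient_step_inner:
  fixes H :: "real^'n^'n"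
  assumes g: "norm g = 1" and s: "s = - (H *v g)" and s0: "s \<noteq> 0"
    and y: "y = (1 / norm s) *\<^sub>R s - g"
  shows "s \<bullet> y = norm s + g \<bullet> (H *v g)"
    and "y \<bullet> y = 2 * (s \<bullet> y) / norm s"
    and "g \<bullet> (H *v g) \<le> norm s"
proof -
  have sg: "s \<bullet> g = - (g \<bullet> (H *v g))" by (simp add: s inner_commute)
  have gg: "g \<bullet> g = 1" using g by (simp add: norm_eq_1)
  have ss: "s \<bullet> s = norm s * norm s" by (simp add: dot_square_norm power2_eq_square)
  show sy: "s \<bullet> y = norm s + g \<bullet> (H *v g)"
    using s0 by (simp add: y inner_diff_right ss sg)
  show "y \<bullet> y = 2 * (s \<bullet> y) / norm s"
    using s0 by (simp add: sy y inner_diff_left inner_diff_right ss sg gg inner_commute[of g s]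
        field_simps)
  show "g \<bullet> (H *v g) \<le> norm s"
    using norm_cauchy_schwarz[of "- s" g] g by (simp add: sg)
qed

text \<open>Write \<open>x = z + c y\<close> with \<open>z = V\<^sup>T x\<close>, which is orthogonal to \<open>s = -H g\<close>, and apply the
  Rayleigh bound for \<open>H\<close> at \<open>z - c g\<close>; what remains is \<open>|s| \<le> L (1 + 2 g\<^sup>THg / |s|)\<close>.\<close>

lemma bfgs_update_rayleigh_bound:
  fixes H :: "real^'n^'n"
  assumes sym: "transpose H = H" and pd: "pos_def H" and g: "norm g = 1"
    and s: "s = - (H *v g)" and s0: "s \<noteq> 0" and y: "y = (1 / norm s) *\<^sub>R s - g"
    and ray: "\<And>x. x \<bullet> (H *v x) \<le> L * (x \<bullet> x)" and sL: "norm s \<le> L"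
  shows "x \<bullet> (bfgs_update H s y *v x) \<le> L * (x \<bullet> x)"
proof -
  define a where "a = g \<bullet> (H *v g)"
  define \<sigma> where "\<sigma> = norm s"
  define \<rho> where "\<rho> = s \<bullet> y"
  note step = normalized_gradient_step_inner[OF g s s0 y, folded a_def \<sigma>_def \<rho>_def]
  have a_nonneg: "0 \<le> a" unfolding a_def by (rule pos_def_nonneg[OF pd])
  have \<sigma>_pos: "0 < \<sigma>" using s0 by (simp add: \<sigma>_def)
  have \<rho>_pos: "0 < \<rho>" using step(1) a_nonneg \<sigma>_pos by simp
  define c where "c = (s \<bullet> x) / \<rho>"
  define z where "z = transpose (bfgs_projection s y) *v x"
  have x: "x = z + c *\<^sub>R y"
    by (simp add: z_def transpose_bfgs_projection_mult c_def \<rho>_def)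
  have zs: "z \<bullet> s = 0"
    using inner_transpose_bfgs_projection[of s y x] \<rho>_pos by (simp add: z_def \<rho>_def inner_commute)
  have zy: "z \<bullet> y = - (z \<bullet> g)"
    using zs by (simp add: y inner_diff_right)
  have HzHg: "z \<bullet> (H *v g) = 0" "g \<bullet> (H *v z) = 0"
    using zs symmetric_inner_matrix_vector[OF sym, of g z] by (simp_all add: s inner_commute)
  have "x \<bullet> (bfgs_update H s y *v x) = z \<bullet> (H *v z) + c * c * \<rho>"
    using bfgs_update_quadratic_form[where H = H and x = x] \<rho>_pos
    by (simp add: z_def[symmetric] c_def \<rho>_def[symmetric] power2_eq_square)
  also have "\<dots> \<le> L * (z \<bullet> z - 2 * c * (z \<bullet> g) + c * c) + c * c * \<sigma>"
  proof -
    define w where "w = z - c *\<^sub>R g"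
    have "w \<bullet> (H *v w) = z \<bullet> (H *v z) + c * c * a"
      by (simp add: w_def matrix_vector_mult_diff_distrib matrix_vector_mult_scaleR inner_diff_left
          inner_diff_right HzHg a_def[symmetric] algebra_simps)
    moreover have "w \<bullet> w = z \<bullet> z - 2 * c * (z \<bullet> g) + c * c"
      using g by (simp add: w_def inner_diff_left inner_diff_right norm_eq_1 inner_commute[of g z]
          algebra_simps)
    ultimately have "z \<bullet> (H *v z) + c * c * a \<le> L * (z \<bullet> z - 2 * c * (z \<bullet> g) + c * c)"
      using ray[of w] by simp
    then show ?thesis using step(1) by (simp add: algebra_simps)
  qed
  also have "\<dots> \<le> L * (z \<bullet> z - 2 * c * (z \<bullet> g) + c * c * (2 * \<rho> / \<sigma>))"
  proof -
    have "L * (2 * \<rho> / \<sigma>) = L + (L + 2 * L * a / \<sigma>)"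
      using \<sigma>_pos by (simp add: step(1) field_simps)
    moreover have "0 \<le> L" using sL norm_ge_zero order_trans by blast
    then have "0 \<le> 2 * L * a / \<sigma>" using a_nonneg \<sigma>_pos by simp
    ultimately have "L + \<sigma> \<le> L * (2 * \<rho> / \<sigma>)" using sL by (simp add: \<sigma>_def)
    then have "c * c * (L + \<sigma>) \<le> c * c * (L * (2 * \<rho> / \<sigma>))"
      by (rule mult_left_mono) simp
    then show ?thesis by (simp add: algebra_simps)
  qed
  also have "\<dots> = L * (x \<bullet> x)"
    by (simp add: x inner_add_left inner_add_right zy step(2) inner_commute[of y z] algebra_simps)
  finally show ?thesis .
qed

theorem mainTheorem7:
  fixes g :: "real^'n" and H :: "real^'n^'n"
  assumes "norm g = 1"
    and "transpose H = H"
    and "pos_def H"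
  defines "s \<equiv> - (H *v g)"
  defines "gp \<equiv> (1 / norm s) *\<^sub>R s"
  defines "y \<equiv> gp - g"
  defines "V \<equiv> mat 1 - (1 / (s \<bullet> y)) *\<^sub>R outer s y"
  defines "Hp \<equiv> V ** H ** transpose V + (1 / (s \<bullet> y)) *\<^sub>R outer s s"
  shows "det Hp \<le> det H / 2 \<and> lambda_max Hp \<le> lambda_max H"
proof -
  have "g \<noteq> 0" using assms(1) by auto
  then have a_pos: "0 < g \<bullet> (H *v g)"
    using assms(3) unfolding pos_def_def by blast
  then have s0: "s \<noteq> 0" by (auto simp: s_def)
  have s: "s = - (H *v g)" by (simp add: s_def)
  have y: "y = (1 / norm s) *\<^sub>R s - g" by (simp add: y_def gp_def)
  note step = normalized_gradient_step_inner[OF assms(1) s s0 y]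
  have Hp: "Hp = bfgs_update H s y"
    by (simp add: Hp_def V_def bfgs_update_def bfgs_projection_def)
  have \<rho>_pos: "0 < s \<bullet> y"
    using a_pos step(1) by (simp add: add_nonneg_pos)
  have "det Hp = (g \<bullet> (H *v g)) / (s \<bullet> y) * det H"
    unfolding Hp by (rule det_bfgs_update_gradient[OF assms(2) _ a_pos \<rho>_pos]) (simp add: s)
  also have "\<dots> \<le> 1 / 2 * det H"
    using det_pos_if_pos_def[OF assms(3)] a_pos step(1,3) by (intro mult_right_mono) (simp_all add: field_simps)
  finally have "det Hp \<le> det H / 2" by simp
  moreover have "lambda_max Hp \<le> lambda_max H"
    unfolding Hp
  proof (rule eigenvalue_le_rayleigh_bound[OF lambda_max_symmetric(1)[OF symmetric_bfgs_update]])
    show "transpose H = H" by (rule assms(2))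
    show "x \<bullet> (bfgs_update H s y *v x) \<le> lambda_max H * (x \<bullet> x)" for x
      using norm_matrix_vector_le_lambda_max[OF assms(2,3), of g] assms(1)
      by (intro bfgs_update_rayleigh_bound[OF assms(2,3,1) s s0 y lambda_max_symmetric(2)[OF assms(2)]])
        (simp add: s_def)
  qed
  ultimately show ?thesis ..
qed

end
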